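(* Let $V$ be an oriented $4$-dimensional real inner product space with an oriented orthonormal basis $f^1,\dots,f^4$ of $V^*$ and dual basis $f_1,\dots,f_4$ of $V$, let $\omega_1=f^1\wedge f^2+f^3\wedge f^4$, $\omega_2=f^1\wedge f^3+f^4\wedge f^2$, $\omega_3=f^1\wedge f^4+f^2\wedge f^3$, and let $e_1,e_2,e_3$ be the standard basis of $\mathbb{R}^3$. Consider the linear map $C:V\otimes V^*\otimes\mathbb{R}^3\to V^*\otimes V^*\otimes\Lambda^2\mathbb{R}^3$, $$C:\ s^{pk}_qf_p\otimes f^q\otimes e_k\longmapsto\sum_{j=1}^3s^{pk}_q(f_p\lrcorner\omega_j)\otimes f^q\otimes(e_k\wedge e_j)$$ (summation over repeated indices), where $f_p\lrcorner\omega_j\in V^*$ is the interior product. Then $C$ is an isomorphism.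
   Context: $\omega_1,\omega_2,\omega_3$ are the standard hyperkähler (self-dual) $2$-forms on $V$. *)

theory Defs
  imports "HOL-Analysis.Analysis"
begin

text \<open>Model: V = real^4 with its standard (oriented, orthonormal) basis f_1..f_4,
  the dual basis f^1..f^4 being the coordinate functionals.  Elements of
  V (x) V^* (x) R^3 are coefficient arrays s with s$p$q$k = s^{pk}_q.
  Bilinear forms / 2-forms on a space real^'n are represented by their
  coefficient matrices B with B(u,v) = sum_{a,b} B$a$b u_a v_b;
  Lambda^2 of a space is realised as the skew-symmetric such matrices,
  with (x^a wedge x^b)(u,v) = u_a v_b - u_b v_a.\<close>

definition wedge :: "'n::finite \<Rightarrow> 'n \<Rightarrow> real^'n^'n" where
  "wedge a b = (\<chi> i j. (if i = a \<and> j = b then 1 else 0) - (if i = b \<and> j = a then 1 else 0))"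

definition omega :: "3 \<Rightarrow> real^4^4" where
  "omega j = (if j = 1 then wedge 1 2 + wedge 3 4
              else if j = 2 then wedge 1 3 + wedge 4 2
              else wedge 1 4 + wedge 2 3)"

definition interior :: "4 \<Rightarrow> real^4^4 \<Rightarrow> real^4" where
  "interior p w = (\<chi> a. w $ p $ a)"

text \<open>The map C : V (x) V^* (x) R^3 \<rightarrow> V^* (x) V^* (x) Lambda^2 R^3;
  the result t satisfies: t$a$q is the Lambda^2 R^3 component of f^a (x) f^q.\<close>
definition Cmap :: "real^3^4^4 \<Rightarrow> real^3^3^4^4" where
  "Cmap s = (\<chi> a q. \<Sum>p\<in>UNIV. \<Sum>k\<in>UNIV. \<Sum>j\<in>UNIV.
                 (s $ p $ q $ k * interior p (omega j) $ a) *\<^sub>R wedge k j)"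

definition Lambda2_target :: "(real^3^3^4^4) set" where
  "Lambda2_target = {t. \<forall>a q. transpose (t $ a $ q) = - (t $ a $ q)}"

end

(* Put J_j u := u \<lrcorner> \<omega>_j, read as a vector via the inner product.  Fix q and let u_k be
   the V-part of s along f^q \<otimes> e_k; then the part of C(s) along f^q \<otimes> (e_m \<and> e_n) is
   J_n u_m - J_m u_n.  The J_j satisfy the quaternion relations J_1^2 = J_2^2 = -1,
   J_1 J_2 = -J_2 J_1 = J_3, and with these the system J_2 u_1 - J_1 u_2 = a,
   J_3 u_1 - J_1 u_3 = b, J_3 u_2 - J_2 u_3 = c has the unique solution
   2 u_1 = c - J_2 a - J_3 b, 2 u_2 = J_1 a - J_3 c - b, 2 u_3 = J_1 b + J_2 c + a. *)

theory Submission
  imports Defs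
begin

lemma sum_wedge_component:
  fixes x :: "'n::finite \<Rightarrow> 'n \<Rightarrow> real"
  shows "(\<Sum>k\<in>UNIV. \<Sum>j\<in>UNIV. x k j * wedge k j $ m $ n) = x m n - x n m"
proof -
  have "(\<Sum>j\<in>UNIV. x k j * wedge k j $ m $ n) =
        (if k = m then x k n else 0) - (if k = n then x k m else 0)" for k
    by (simp add: wedge_def right_diff_distrib sum_subtractf if_distrib[of "\<lambda>y. _ * y"]
        conj_commute cong: if_cong)
  then show ?thesis by (simp add: sum_subtractf)
qed

lemma skew_matrix3_eq_iff:
  fixes A B :: "real^3^3"
  assumes "transpose A = - A" and "transpose B = - B"
  shows "A = B \<longleftrightarrow> A$1$2 = B$1$2 \<and> A$1$3 = B$1$3 \<and> A$2$3 = B$2$3"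
proof
  have skew: "M$j$i = - M$i$j" if "transpose M = - M" for M :: "real^3^3" and i j
    using arg_cong[OF that, of "\<lambda>M. M$i$j"] by (simp add: transpose_def)
  have diag: "M$i$i = 0" if "transpose M = - M" for M :: "real^3^3" and i
    using skew[OF that, of i i] by simp
  have lower: "M$2$1 = - M$1$2" "M$3$1 = - M$1$3" "M$3$2 = - M$2$3"
    if "transpose M = - M" for M :: "real^3^3"
    using skew[OF that] by blast+
  assume "A$1$2 = B$1$2 \<and> A$1$3 = B$1$3 \<and> A$2$3 = B$2$3"
  then have "A$i$j = B$i$j" for i j
    using exhaust_3[of i] exhaust_3[of j] diag[OF assms(1)] diag[OF assms(2)]
      lower[OF assms(1)] lower[OF assms(2)]
    by (elim disjE) simp_all
  then show "A = B" by (simp add: vec_eq_iff)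
qed simp

lemma hypercomplex_cross_system_iff:
  fixes I J K :: "'v::real_vector \<Rightarrow> 'v"
  assumes "linear I" and "linear J"
    and II: "\<And>x. I (I x) = - x" and JJ: "\<And>x. J (J x) = - x"
    and JI: "\<And>x. J (I x) = - I (J x)" and IJ: "\<And>x. I (J x) = K x"
  shows "(a = J u1 - I u2 \<and> b = K u1 - I u3 \<and> c = K u2 - J u3) \<longleftrightarrow>
         (u1 = (1/2) *\<^sub>R (c - J a - K b) \<and> u2 = (1/2) *\<^sub>R (I a - K c - b) \<and>
          u3 = (1/2) *\<^sub>R (I b + J c + a))"
proof -
  note rules = linear_diff[OF assms(1)] linear_add[OF assms(1)] linear_neg[OF assms(1)]
    linear_scale[OF assms(1)] linear_diff[OF assms(2)] linear_add[OF assms(2)]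
    linear_neg[OF assms(2)] linear_scale[OF assms(2)] II JJ JI IJ[symmetric]
  show ?thesis
  proof
    assume "a = J u1 - I u2 \<and> b = K u1 - I u3 \<and> c = K u2 - J u3"
    then show "u1 = (1/2) *\<^sub>R (c - J a - K b) \<and> u2 = (1/2) *\<^sub>R (I a - K c - b) \<and>
               u3 = (1/2) *\<^sub>R (I b + J c + a)"
      by (elim conjE) (simp (no_asm_simp) add: rules algebra_simps flip: scaleR_add_left)
  next
    assume "u1 = (1/2) *\<^sub>R (c - J a - K b) \<and> u2 = (1/2) *\<^sub>R (I a - K c - b) \<and>
            u3 = (1/2) *\<^sub>R (I b + J c + a)"
    then show "a = J u1 - I u2 \<and> b = K u1 - I u3 \<and> c = K u2 - J u3"
      by (elim conjE) (simp (no_asm_simp) add: rules algebra_simps flip: scaleR_add_left)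
  qed
qed

definition complex_structure :: "3 \<Rightarrow> real^4 \<Rightarrow> real^4" where
  "complex_structure j u = u v* omega j"

lemma linear_complex_structure: "linear (complex_structure j)"
  unfolding complex_structure_def transpose_matrix_vector[symmetric] by simp

lemma complex_structure_quaternion_relations:
  "complex_structure 1 (complex_structure 1 u) = - u"
  "complex_structure 2 (complex_structure 2 u) = - u"
  "complex_structure 2 (complex_structure 1 u) = - complex_structure 1 (complex_structure 2 u)"
  "complex_structure 1 (complex_structure 2 u) = complex_structure 3 u"
  by (simp_all add: complex_structure_def vector_matrix_mult_def vec_eq_iff forall_4 sum_4
      omega_def wedge_def)

definition vector_part :: "real^3^4^4 \<Rightarrow> 4 \<Rightarrow> 3 \<Rightarrow> real^4" where
  "vector_part s q k = (\<chi> p. s$p$q$k)"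

definition covector_part :: "real^3^3^4^4 \<Rightarrow> 4 \<Rightarrow> 3 \<Rightarrow> 3 \<Rightarrow> real^4" where
  "covector_part t q m n = (\<chi> a. t$a$q$m$n)"

lemma vector_part_eq_iff: "s = s' \<longleftrightarrow> (\<forall>q k. vector_part s q k = vector_part s' q k)"
proof
  assume "\<forall>q k. vector_part s q k = vector_part s' q k"
  then have "vector_part s q k $ p = vector_part s' q k $ p" for p q k
    by simp
  then have "s$p$q$k = s'$p$q$k" for p q k
    by (simp add: vector_part_def)
  then show "s = s'" by (simp add: vec_eq_iff)
qed simp

lemma Lambda2_target_eq_iff:
  assumes "t \<in> Lambda2_target" and "t' \<in> Lambda2_target"
  shows "t = t' \<longleftrightarrow> (\<forall>q. covector_part t q 1 2 = covector_part t' q 1 2 \<and>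
                          covector_part t q 1 3 = covector_part t' q 1 3 \<and>
                          covector_part t q 2 3 = covector_part t' q 2 3)"
    (is "_ \<longleftrightarrow> ?parts")
proof -
  have "t = t' \<longleftrightarrow> (\<forall>a q. t$a$q = t'$a$q)"
    by (simp add: vec_eq_iff)
  also have "\<dots> \<longleftrightarrow> (\<forall>a q. t$a$q$1$2 = t'$a$q$1$2 \<and> t$a$q$1$3 = t'$a$q$1$3 \<and>
                          t$a$q$2$3 = t'$a$q$2$3)"
    using assms by (simp add: Lambda2_target_def skew_matrix3_eq_iff)
  also have "\<dots> \<longleftrightarrow> ?parts"
    by (auto simp: covector_part_def vec_eq_iff)
  finally show ?thesis .
qed

lemma Cmap_component:
  "Cmap s $ a $ q $ m $ n = (\<Sum>p\<in>UNIV. s$p$q$m * omega n $ p $ a - s$p$q$n * omega m $ p $ a)"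
  by (simp add: Cmap_def interior_def sum_wedge_component)

lemma linear_Cmap: "linear Cmap"
  by (rule linearI) (simp_all add: vec_eq_iff Cmap_component ring_distribs sum.distrib
      sum_distrib_left sum_subtractf mult.assoc)

lemma covector_part_Cmap:
  "covector_part (Cmap s) q m n =
     complex_structure n (vector_part s q m) - complex_structure m (vector_part s q n)"
  by (simp add: vec_eq_iff covector_part_def vector_part_def complex_structure_def
      vector_matrix_mult_def Cmap_component sum_subtractf mult.commute)

lemma Cmap_in_Lambda2_target: "Cmap s \<in> Lambda2_target"
  by (simp add: Lambda2_target_def vec_eq_iff transpose_def Cmap_component sum_subtractf)

definition Cmap_inverse :: "real^3^3^4^4 \<Rightarrow> real^3^4^4" where
  "Cmap_inverse t = (\<chi> p q k.
     (let a = covector_part t q 1 2; b = covector_part t q 1 3; c = covector_part t q 2 3 in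
      (1/2) *\<^sub>R
        (if k = 1 then c - complex_structure 2 a - complex_structure 3 b
         else if k = 2 then complex_structure 1 a - complex_structure 3 c - b
         else complex_structure 1 b + complex_structure 2 c + a)) $ p)"

lemma vector_part_Cmap_inverse:
  "vector_part (Cmap_inverse t) q 1 =
     (1/2) *\<^sub>R (covector_part t q 2 3 - complex_structure 2 (covector_part t q 1 2)
                  - complex_structure 3 (covector_part t q 1 3))"
  "vector_part (Cmap_inverse t) q 2 =
     (1/2) *\<^sub>R (complex_structure 1 (covector_part t q 1 2)
                  - complex_structure 3 (covector_part t q 2 3) - covector_part t q 1 3)"
  "vector_part (Cmap_inverse t) q 3 =
     (1/2) *\<^sub>R (complex_structure 1 (covector_part t q 1 3)
                  + complex_structure 2 (covector_part t q 2 3) + covector_part t q 1 2)"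
  by (simp_all add: vector_part_def Cmap_inverse_def vec_eq_iff)

lemmas complex_structure_system_iff =
  hypercomplex_cross_system_iff
    [of "complex_structure 1" "complex_structure 2" "complex_structure 3",
     OF linear_complex_structure linear_complex_structure complex_structure_quaternion_relations]

lemma Cmap_eq_iff:
  assumes "t \<in> Lambda2_target"
  shows "Cmap s = t \<longleftrightarrow> s = Cmap_inverse t"
proof -
  have "Cmap s = t \<longleftrightarrow>
    (\<forall>q. covector_part t q 1 2 =
           complex_structure 2 (vector_part s q 1) - complex_structure 1 (vector_part s q 2) \<and>
         covector_part t q 1 3 =
           complex_structure 3 (vector_part s q 1) - complex_structure 1 (vector_part s q 3) \<and>
         covector_part t q 2 3 =
           complex_structure 3 (vector_part s q 2) - complex_structure 2 (vector_part s q 3))"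
    unfolding eq_commute[of "Cmap s" t] Lambda2_target_eq_iff[OF assms Cmap_in_Lambda2_target]
      covector_part_Cmap ..
  also have "\<dots> \<longleftrightarrow> (\<forall>q. vector_part s q 1 = vector_part (Cmap_inverse t) q 1 \<and>
                         vector_part s q 2 = vector_part (Cmap_inverse t) q 2 \<and>
                         vector_part s q 3 = vector_part (Cmap_inverse t) q 3)"
    unfolding vector_part_Cmap_inverse by (intro all_cong1 complex_structure_system_iff)
  also have "\<dots> \<longleftrightarrow> s = Cmap_inverse t"
    by (simp add: vector_part_eq_iff[of s] forall_3)
  finally show ?thesis .
qed

theorem propositionA3:
  shows "linear Cmap \<and> bij_betw Cmap UNIV Lambda2_target"
proof
  show "linear Cmap" by (rule linear_Cmap)
  have "Cmap (Cmap_inverse t) = t" if "t \<in> Lambda2_target" for t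
    using Cmap_eq_iff[OF that] by simp
  moreover have "Cmap_inverse (Cmap s) = s" for s
    using Cmap_eq_iff[OF Cmap_in_Lambda2_target, of s s] by simp
  ultimately show "bij_betw Cmap UNIV Lambda2_target"
    by (intro bij_betw_byWitness[where f' = Cmap_inverse]) (auto intro: Cmap_in_Lambda2_target)
qed

end
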